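(* Let $K$ be a countably infinite complete multipartite graph. (i) If $K$ has at least two infinite parts, or infinitely many vertices lying in finite parts, then $K$ is not Ramsey-dense: there is a 2-coloring of the edges of $K_\mathbb{N}$ in which every monochromatic copy of $K$ has upper density $0$. (ii) If $K$ has exactly one infinite part and exactly $n\ge1$ vertices lying in finite parts, then $\frac{1}{2^{2n-1}}\le \mathrm{Rd}_2(K)\le\frac{1}{2^n}$.
   Context: $K_{\mathbb{N}}$ is the complete graph on $\mathbb{N}=\{1,2,\dots\}$; a copy of $K$ is a subgraph of $K_\mathbb{N}$ isomorphic to $K$, monochromatic if all its edges have the same color. $\overline{d}(V)=\limsup_{t\to\infty}|V\cap\{1,\dots,t\}|/t$. A graph is Ramsey-dense if in every 2-coloring of the edges of $K_\mathbb{N}$ there is a monochromatic copy of it with positive upper density. For a 2-coloring $\varphi$, $\mathrm{Rd}_\varphi(K)$ is the supremum of the upper densities of monochromatic copies of $K$, and $\mathrm{Rd}_2(K)=\inf_\varphi\mathrm{Rd}_\varphi(K)$. *)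

theory Defs
  imports "HOL-Analysis.Analysis" "HOL-Library.Liminf_Limsup"
begin

text \<open>A complete multipartite graph K is given by a vertex set V and a part-labelling
  p; u,v in V are adjacent iff p u \<noteq> p v. The parts are the nonempty fibres of p on V.\<close>

definition part_of :: "'a set \<Rightarrow> ('a \<Rightarrow> 'b) \<Rightarrow> 'a \<Rightarrow> 'a set" where
  "part_of V p v = {u \<in> V. p u = p v}"

text \<open>A 2-colouring of the edges of K_N: a colour (bool) for every 2-subset of N = {1,2,...}.\<close>
type_synonym coloring = "nat set \<Rightarrow> bool"

definition upper_density :: "nat set \<Rightarrow> ereal" where
  "upper_density W = limsup (\<lambda>t. ereal (real (card (W \<inter> {1..t})) / real t))"

definition mono_copy :: "coloring \<Rightarrow> 'a set \<Rightarrow> ('a \<Rightarrow> 'b) \<Rightarrow> ('a \<Rightarrow> nat) \<Rightarrow> bool" where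
  "mono_copy \<phi> V p f \<longleftrightarrow> inj_on f V \<and> f ` V \<subseteq> {1..} \<and>
     (\<exists>c. \<forall>u\<in>V. \<forall>v\<in>V. p u \<noteq> p v \<longrightarrow> \<phi> {f u, f v} = c)"

definition ramsey_dense :: "'a set \<Rightarrow> ('a \<Rightarrow> 'b) \<Rightarrow> bool" where
  "ramsey_dense V p \<longleftrightarrow> (\<forall>\<phi>::coloring. \<exists>f. mono_copy \<phi> V p f \<and> upper_density (f ` V) > 0)"

definition Rd_col :: "coloring \<Rightarrow> 'a set \<Rightarrow> ('a \<Rightarrow> 'b) \<Rightarrow> ereal" where
  "Rd_col \<phi> V p = Sup {upper_density (f ` V) | f. mono_copy \<phi> V p f}"

definition Rd2 :: "'a set \<Rightarrow> ('a \<Rightarrow> 'b) \<Rightarrow> ereal" where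
  "Rd2 V p = Inf {Rd_col \<phi> V p | \<phi>. True}"

end

theory Submission
  imports Defs
begin

text \<open>
  Colour the edge \<open>{a < w}\<close> by the \<open>a\<close>-th binary digit of \<open>w\<close>. The vertices joined in
  colour \<open>c\<close> to every vertex of a set \<open>J\<close> have \<open>|J|\<close> prescribed binary digits, so they form a
  set of upper density at most \<open>2^-|J|\<close>, and of upper density \<open>0\<close> when \<open>J\<close> is infinite. In a
  monochromatic copy of \<open>K\<close>, every vertex outside the finite parts is such a common neighbour of
  the \<open>n\<close> vertices in finite parts, whence \<open>Rd\<^sub>2(K) \<le> 2^-n\<close>; under the hypotheses of (i),
  every vertex of the copy is a common neighbour of one of two infinite sets of its vertices, so the
  copy has upper density \<open>0\<close>.

  For the lower bound, a density version of the Erd\H{o}s--Szekeres argument finds, in every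
  colouring and every set \<open>X\<close> of upper density \<open>\<delta> > 0\<close>, a colour \<open>c\<close>, a \<open>c\<close>-clique \<open>F\<close> of
  size \<open>a\<close> (if \<open>c\<close>) or \<open>b\<close> (if not \<open>c\<close>), and a set \<open>Y\<close> of upper density \<open>\<delta> / 2^(a+b-1)\<close>
  joined in colour \<open>c\<close> to all of \<open>F\<close>: pick a vertex of \<open>X\<close>, pass to its denser colour class
  and recurse. With \<open>a = b = n\<close>, mapping the finite parts onto \<open>F\<close> and the infinite part onto
  \<open>Y\<close> gives a monochromatic copy of upper density at least \<open>2^(1-2n)\<close>.
\<close>

section \<open>Upper density\<close>

lemma upper_density_le_linear_bound:
  assumes "\<And>t. t \<ge> 1 \<Longrightarrow> real (card (A \<inter> {1..t})) \<le> e * real t + C"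
  shows "upper_density A \<le> ereal e"
proof -
  have "\<forall>\<^sub>F t in sequentially. ereal (real (card (A \<inter> {1..t})) / real t) \<le> ereal (e + C / real t)"
  proof (rule eventually_sequentiallyI[of 1])
    fix t :: nat assume t: "t \<ge> 1"
    then have "real (card (A \<inter> {1..t})) / real t \<le> (e * real t + C) / real t"
      using assms by (simp add: divide_right_mono)
    also have "\<dots> = e + C / real t" using t by (simp add: field_simps)
    finally show "ereal (real (card (A \<inter> {1..t})) / real t) \<le> ereal (e + C / real t)" by simp
  qed
  then have "upper_density A \<le> limsup (\<lambda>t. ereal (e + C / real t))"
    unfolding upper_density_def by (rule Limsup_mono)
  also have "\<dots> = ereal e"
    using tendsto_add[OF tendsto_const lim_const_over_n, of e C]
    by (intro lim_imp_Limsup tendsto_ereal) auto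
  finally show ?thesis .
qed

lemma upper_density_nonneg: "upper_density A \<ge> 0"
  unfolding upper_density_def by (rule le_Limsup) auto

lemma upper_density_mono:
  assumes "A \<subseteq> B"
  shows "upper_density A \<le> upper_density B"
  unfolding upper_density_def
proof (intro Limsup_mono always_eventually allI)
  fix t
  have "card (A \<inter> {1..t}) \<le> card (B \<inter> {1..t})" using assms by (intro card_mono) auto
  then show "ereal (real (card (A \<inter> {1..t})) / real t) \<le> ereal (real (card (B \<inter> {1..t})) / real t)"
    by (simp add: divide_right_mono)
qed

lemma upper_density_Un_le: "upper_density (A \<union> B) \<le> upper_density A + upper_density B"
proof -
  have "upper_density (A \<union> B) \<le>
      limsup (\<lambda>t. ereal (real (card (A \<inter> {1..t})) / real t) + ereal (real (card (B \<inter> {1..t})) / real t))"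
    unfolding upper_density_def
  proof (intro Limsup_mono always_eventually allI)
    fix t
    have "card ((A \<union> B) \<inter> {1..t}) \<le> card (A \<inter> {1..t}) + card (B \<inter> {1..t})"
      by (metis Int_Un_distrib2 card_Un_le)
    then show "ereal (real (card ((A \<union> B) \<inter> {1..t})) / real t) \<le>
        ereal (real (card (A \<inter> {1..t})) / real t) + ereal (real (card (B \<inter> {1..t})) / real t)"
      by (simp add: divide_right_mono flip: add_divide_distrib)
  qed
  also have "\<dots> \<le> upper_density A + upper_density B"
    unfolding upper_density_def by (rule ereal_limsup_add_mono)
  finally show ?thesis .
qed

lemma upper_density_finite:
  assumes "finite A"
  shows "upper_density A = 0"
proof -
  have "upper_density A \<le> ereal 0"
  proof (rule upper_density_le_linear_bound[where C = "real (card A)"])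
    fix t :: nat
    have "card (A \<inter> {1..t}) \<le> card A" using assms by (intro card_mono) auto
    then show "real (card (A \<inter> {1..t})) \<le> 0 * real t + real (card A)" by simp
  qed
  then show ?thesis using upper_density_nonneg[of A] by (simp add: zero_ereal_def)
qed

lemma upper_density_Un_finite:
  assumes "finite F"
  shows "upper_density (A \<union> F) = upper_density A"
  using upper_density_Un_le[of A F] upper_density_mono[of A "A \<union> F"] upper_density_finite[OF assms]
  by auto

lemma infinite_if_upper_density_pos: "upper_density A > 0 \<Longrightarrow> infinite A"
  using upper_density_finite by fastforce

lemma upper_density_atLeast_1: "upper_density {1..} \<ge> 1"
  unfolding upper_density_def
proof (rule le_Limsup)
  show "\<forall>\<^sub>F t in sequentially. 1 \<le> ereal (real (card ({1..} \<inter> {1..t})) / real t)"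
    by (rule eventually_sequentiallyI[of 1]) (simp add: Int_absorb1)
qed simp

section \<open>The binary colouring\<close>

lemma not_bit_less_two_power:
  fixes r :: nat
  shows "r < 2 ^ M \<Longrightarrow> \<not> bit r M"
  by (simp add: bit_iff_odd)

lemma bit_add_two_power:
  fixes r :: nat
  assumes "r < 2 ^ M"
  shows "bit (r + 2 ^ M) k \<longleftrightarrow> bit r k \<or> k = M"
  using not_bit_less_two_power[OF assms]
  by (subst bit_disjunctive_add_iff) (auto simp: bit_exp_iff)

lemma card_bit_pattern_lessThan_power:
  assumes "J \<subseteq> {..<M}"
  shows "card {r \<in> {..<2 ^ M :: nat}. \<forall>k\<in>J. bit r k = c} = 2 ^ (M - card J)"
  using assms
proof (induction M arbitrary: J)
  case 0
  then show ?case by simp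
next
  case (Suc M)
  define J' where "J' = J - {M}"
  define B where "B = {r \<in> {..<2 ^ M :: nat}. \<forall>k\<in>J'. bit r k = c}"
  have J': "J' \<subseteq> {..<M}" using Suc.prems by (auto simp: J'_def less_Suc_eq)
  then have card_B: "card B = 2 ^ (M - card J')" using Suc.IH by (simp add: B_def)
  define Lo where "Lo = {r \<in> {..<2 ^ M :: nat}. \<forall>k\<in>J. bit r k = c}"
  define Hi where "Hi = {r \<in> {..<2 ^ M :: nat}. \<forall>k\<in>J. bit (r + 2 ^ M) k = c}"
  have low: "Lo = (if M \<in> J \<and> c then {} else B)"
    by (auto simp: Lo_def B_def J'_def dest: not_bit_less_two_power)
  have high: "Hi = (if M \<in> J \<and> \<not> c then {} else B)"
    by (auto simp: Hi_def B_def J'_def bit_add_two_power)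
  have "{..<2 ^ Suc M :: nat} = {..<2 ^ M} \<union> (\<lambda>r. r + 2 ^ M) ` {..<2 ^ M}"
  proof (intro equalityI subsetI)
    fix x :: nat assume "x \<in> {..<2 ^ Suc M}"
    then show "x \<in> {..<2 ^ M} \<union> (\<lambda>r. r + 2 ^ M) ` {..<2 ^ M}"
      by (cases "x < 2 ^ M") (auto simp: image_iff intro!: bexI[of _ "x - 2 ^ M"])
  qed auto
  then have "{r \<in> {..<2 ^ Suc M}. \<forall>k\<in>J. bit r k = c} = Lo \<union> (\<lambda>r. r + 2 ^ M) ` Hi"
    unfolding Lo_def Hi_def by auto
  also have "card \<dots> = card Lo + card Hi"
    by (subst card_Un_disjoint) (auto simp: Lo_def Hi_def card_image)
  also have "\<dots> = 2 ^ (Suc M - card J)"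
  proof (cases "M \<in> J")
    case True
    then have "card J = Suc (card J')"
      using Suc.prems unfolding J'_def by (metis card_Suc_Diff1 finite_lessThan finite_subset)
    then show ?thesis using True low high card_B by (cases c) (auto simp: Suc_diff_le)
  next
    case False
    then have "card J \<le> M" using J' by (simp add: J'_def card_mono[of "{..<M}", simplified])
    then show ?thesis using False low high card_B by (simp add: J'_def Suc_diff_le)
  qed
  finally show ?case .
qed

lemma card_bit_pattern_lessThan_le:
  assumes "J \<subseteq> {..<M}"
  shows "card {x \<in> {..<t :: nat}. \<forall>k\<in>J. bit x k = c} \<le> (t div 2 ^ M + 1) * 2 ^ (M - card J)"
proof -
  define R where "R = {r \<in> {..<2 ^ M :: nat}. \<forall>k\<in>J. bit r k = c}"
  have "{x \<in> {..<t}. \<forall>k\<in>J. bit x k = c} \<subseteq> (\<lambda>(q, r). q * 2 ^ M + r) ` ({..t div 2 ^ M} \<times> R)"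
  proof
    fix x assume x: "x \<in> {x \<in> {..<t}. \<forall>k\<in>J. bit x k = c}"
    have "x div 2 ^ M \<le> t div 2 ^ M" using x by (simp add: div_le_mono)
    moreover have "x mod 2 ^ M \<in> R"
      using x assms by (auto simp: R_def bit_take_bit_iff simp flip: take_bit_eq_mod)
    moreover have "x = (\<lambda>(q, r). q * 2 ^ M + r) (x div 2 ^ M, x mod 2 ^ M)"
      by (simp add: div_mult_mod_eq)
    ultimately show "x \<in> (\<lambda>(q, r). q * 2 ^ M + r) ` ({..t div 2 ^ M} \<times> R)"
      by blast
  qed
  then have "card {x \<in> {..<t}. \<forall>k\<in>J. bit x k = c} \<le>
      card ((\<lambda>(q, r). q * 2 ^ M + r) ` ({..t div 2 ^ M} \<times> R))"
    by (rule card_mono[rotated]) (simp add: R_def)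
  also have "\<dots> \<le> card ({..t div 2 ^ M} \<times> R)"
    by (rule card_image_le) (simp add: R_def)
  also have "\<dots> = (t div 2 ^ M + 1) * 2 ^ (M - card J)"
    using card_bit_pattern_lessThan_power[OF assms] by (simp add: R_def card_cartesian_product)
  finally show ?thesis .
qed

lemma upper_density_bit_pattern_le:
  assumes "finite J"
  shows "upper_density {x. \<forall>k\<in>J. bit x k = c} \<le> ereal (1 / 2 ^ card J)"
proof -
  define M where "M = Suc (Max (insert 0 J))"
  have J: "J \<subseteq> {..<M}" using assms by (auto simp: M_def less_Suc_eq_le)
  then have "card J \<le> M" using card_mono[of "{..<M}" J] by simp
  then have split_power: "(2::real) ^ M = 2 ^ card J * 2 ^ (M - card J)"
    by (simp flip: power_add)
  show ?thesis
  proof (rule upper_density_le_linear_bound[where C = "1 / 2 ^ card J + 2 ^ (M - card J)"])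
    fix t :: nat
    have "card ({x. \<forall>k\<in>J. bit x k = c} \<inter> {1..t}) \<le> card {x \<in> {..<Suc t}. \<forall>k\<in>J. bit x k = c}"
      by (intro card_mono) auto
    also have "\<dots> \<le> (Suc t div 2 ^ M + 1) * 2 ^ (M - card J)"
      by (rule card_bit_pattern_lessThan_le[OF J])
    finally have "real (card ({x. \<forall>k\<in>J. bit x k = c} \<inter> {1..t})) \<le>
        real ((Suc t div 2 ^ M + 1) * 2 ^ (M - card J))"
      by (rule of_nat_mono)
    also have "\<dots> = (real (Suc t div 2 ^ M) + 1) * 2 ^ (M - card J)"
      by (simp add: algebra_simps)
    also have "\<dots> \<le> (real (Suc t) / 2 ^ M + 1) * 2 ^ (M - card J)"
    proof -
      have "real (Suc t div 2 ^ M) \<le> real (Suc t) / 2 ^ M"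
        using of_nat_div_le_of_nat[of "Suc t" "2 ^ M", where 'a=real] by simp
      then show ?thesis by (rule mult_right_mono[OF add_right_mono]) simp_all
    qed
    also have "\<dots> = 1 / 2 ^ card J * real t + (1 / 2 ^ card J + 2 ^ (M - card J))"
      unfolding split_power by (simp add: field_simps)
    finally show "real (card ({x. \<forall>k\<in>J. bit x k = c} \<inter> {1..t})) \<le>
        1 / 2 ^ card J * real t + (1 / 2 ^ card J + 2 ^ (M - card J))" .
  qed
qed

definition binary_coloring :: coloring where
  "binary_coloring S = bit (Max S) (Min S)"

lemma binary_coloring_less: "a < w \<Longrightarrow> binary_coloring {w, a} = bit w a"
  by (simp add: binary_coloring_def max_def min_def)

definition mono_nbhd :: "coloring \<Rightarrow> bool \<Rightarrow> nat set \<Rightarrow> nat set" where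
  "mono_nbhd \<phi> c A = {w. \<forall>a\<in>A. \<phi> {w, a} = c}"

lemma mono_nbhd_antimono: "A \<subseteq> B \<Longrightarrow> mono_nbhd \<phi> c B \<subseteq> mono_nbhd \<phi> c A"
  by (auto simp: mono_nbhd_def)

lemma upper_density_mono_nbhd_binary_le:
  assumes "finite A"
  shows "upper_density (mono_nbhd binary_coloring c A) \<le> ereal (1 / 2 ^ card A)"
proof -
  have "mono_nbhd binary_coloring c A \<subseteq> {x. \<forall>k\<in>A. bit x k = c} \<union> {..Max (insert 0 A)}"
  proof
    fix w assume w: "w \<in> mono_nbhd binary_coloring c A"
    show "w \<in> {x. \<forall>k\<in>A. bit x k = c} \<union> {..Max (insert 0 A)}"
    proof (cases "w \<le> Max (insert 0 A)")
      case False
      have "\<And>a. a \<in> A \<Longrightarrow> a \<le> Max (insert 0 A)"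
        using assms by simp
      then have "\<And>a. a \<in> A \<Longrightarrow> a < w"
        using False by fastforce
      then show ?thesis
        using w by (simp add: mono_nbhd_def binary_coloring_less)
    qed simp
  qed
  then have "upper_density (mono_nbhd binary_coloring c A) \<le>
      upper_density ({x. \<forall>k\<in>A. bit x k = c} \<union> {..Max (insert 0 A)})"
    by (rule upper_density_mono)
  also have "\<dots> = upper_density {x. \<forall>k\<in>A. bit x k = c}"
    by (simp add: upper_density_Un_finite)
  also have "\<dots> \<le> ereal (1 / 2 ^ card A)"
    by (rule upper_density_bit_pattern_le[OF assms])
  finally show ?thesis .
qed

lemma upper_density_mono_nbhd_binary_infinite:
  assumes "infinite A"
  shows "upper_density (mono_nbhd binary_coloring c A) = 0"
proof -
  have "upper_density (mono_nbhd binary_coloring c A) \<le> ereal (1 / 2 ^ j)" for j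
  proof -
    obtain J where J: "J \<subseteq> A" "finite J" "card J = j"
      using infinite_arbitrarily_large[OF assms] by blast
    have "upper_density (mono_nbhd binary_coloring c A) \<le> upper_density (mono_nbhd binary_coloring c J)"
      by (intro upper_density_mono mono_nbhd_antimono J(1))
    also have "\<dots> \<le> ereal (1 / 2 ^ j)"
      using upper_density_mono_nbhd_binary_le[OF J(2)] J(3) by simp
    finally show ?thesis .
  qed
  moreover have "(\<lambda>j. ereal (1 / 2 ^ j)) \<longlonglongrightarrow> 0"
    using LIMSEQ_inverse_realpow_zero[of 2] by (simp add: zero_ereal_def tendsto_ereal divide_inverse)
  ultimately have "upper_density (mono_nbhd binary_coloring c A) \<le> 0"
    by (intro LIMSEQ_le_const) auto
  then show ?thesis using upper_density_nonneg by (metis antisym)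
qed

lemma mono_copy_image_in_mono_nbhd:
  assumes "\<forall>u\<in>V. \<forall>v\<in>V. p u \<noteq> p v \<longrightarrow> \<phi> {f u, f v} = c"
    and "x \<in> V" "S \<subseteq> V" "p x \<notin> p ` S"
  shows "f x \<in> mono_nbhd \<phi> c (f ` S)"
proof -
  have "\<phi> {f x, f y} = c" if "y \<in> S" for y
    using assms that by (metis image_eqI subsetD)
  then show ?thesis by (auto simp: mono_nbhd_def insert_commute)
qed

lemma upper_density_binary_mono_copy_eq_0:
  assumes copy: "mono_copy binary_coloring V p f"
    and T: "T1 \<subseteq> V" "T2 \<subseteq> V" "infinite T1" "infinite T2" "p ` T1 \<inter> p ` T2 = {}"
  shows "upper_density (f ` V) = 0"
proof -
  obtain c where c: "\<forall>u\<in>V. \<forall>v\<in>V. p u \<noteq> p v \<longrightarrow> binary_coloring {f u, f v} = c"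
    and inj: "inj_on f V"
    using copy by (auto simp: mono_copy_def)
  have "f ` V \<subseteq> mono_nbhd binary_coloring c (f ` T1) \<union> mono_nbhd binary_coloring c (f ` T2)"
  proof
    fix w assume "w \<in> f ` V"
    then obtain x where x: "x \<in> V" "w = f x" by blast
    then have "p x \<notin> p ` T1 \<or> p x \<notin> p ` T2" using T(5) by blast
    then show "w \<in> mono_nbhd binary_coloring c (f ` T1) \<union> mono_nbhd binary_coloring c (f ` T2)"
      using mono_copy_image_in_mono_nbhd[OF c x(1)] T(1,2) x(2) by blast
  qed
  then have "upper_density (f ` V) \<le>
      upper_density (mono_nbhd binary_coloring c (f ` T1) \<union> mono_nbhd binary_coloring c (f ` T2))"
    by (rule upper_density_mono)
  also have "\<dots> \<le>
      upper_density (mono_nbhd binary_coloring c (f ` T1)) + upper_density (mono_nbhd binary_coloring c (f ` T2))"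
    by (rule upper_density_Un_le)
  also have "\<dots> = 0"
    using T inj by (simp add: upper_density_mono_nbhd_binary_infinite finite_image_iff inj_on_subset)
  finally show ?thesis
    using upper_density_nonneg by (metis antisym)
qed

section \<open>Two separated infinite vertex sets\<close>

lemma infinite_image_split:
  assumes "infinite (p ` Q)"
  obtains T1 T2 where "T1 \<subseteq> Q" "T2 \<subseteq> Q" "infinite T1" "infinite T2" "p ` T1 \<inter> p ` T2 = {}"
proof -
  obtain s :: "nat \<Rightarrow> _" where s: "inj s" "range s \<subseteq> p ` Q"
    using infinite_countable_subset[OF assms] by blast
  define T where "T b = {v \<in> Q. p v \<in> s ` {n. even n = b}}" for b
  have image_T: "p ` T b = s ` {n. even n = b}" for b
  proof
    show "p ` T b \<subseteq> s ` {n. even n = b}"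
      by (auto simp: T_def)
    show "s ` {n. even n = b} \<subseteq> p ` T b"
    proof
      fix l assume l: "l \<in> s ` {n. even n = b}"
      then obtain v where "v \<in> Q" "l = p v"
        using s(2) by (metis image_iff rangeI subsetD)
      then show "l \<in> p ` T b"
        using l by (auto simp: T_def)
    qed
  qed
  have "infinite {n::nat. even n = b}" for b
  proof -
    have "range (\<lambda>k. 2 * k + (if b then 0 else 1)) \<subseteq> {n::nat. even n = b}"
      by auto
    moreover have "infinite (range (\<lambda>k::nat. 2 * k + (if b then 0 else 1)))"
      by (rule range_inj_infinite) (simp add: inj_def)
    ultimately show ?thesis
      using finite_subset by blast
  qed
  then have "infinite (p ` T b)" for b
    using s(1) by (simp add: image_T finite_image_iff inj_on_subset[OF s(1)])
  then have infinite_T: "infinite (T b)" for b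
    using finite_imageI by blast
  have disjoint: "p ` T True \<inter> p ` T False = {}"
    by (simp add: image_T flip: image_Int[OF s(1)]) auto
  have "T b \<subseteq> Q" for b
    by (simp add: T_def)
  then show ?thesis
    using that[OF _ _ infinite_T infinite_T disjoint] by blast
qed

lemma infinite_labels_of_finite_parts:
  assumes "infinite {v \<in> V. finite (part_of V p v)}"
  shows "infinite (p ` {v \<in> V. finite (part_of V p v)})"
proof
  let ?Q = "{v \<in> V. finite (part_of V p v)}"
  assume "finite (p ` ?Q)"
  then have "finite (\<Union>v\<in>?Q. part_of V p v)"
    by (rule finite_UN_I[of "p ` ?Q" "\<lambda>b. {w \<in> V. p w = b}", THEN finite_subset[rotated]])
      (auto simp: part_of_def)
  moreover have "?Q \<subseteq> (\<Union>v\<in>?Q. part_of V p v)"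
    by (auto simp: part_of_def)
  ultimately show False
    using assms finite_subset by blast
qed

lemma separated_infinite_subsets:
  assumes "(\<exists>u\<in>V. \<exists>v\<in>V. p u \<noteq> p v \<and> infinite (part_of V p u) \<and> infinite (part_of V p v))
            \<or> infinite {v\<in>V. finite (part_of V p v)}"
  obtains T1 T2 where "T1 \<subseteq> V" "T2 \<subseteq> V" "infinite T1" "infinite T2" "p ` T1 \<inter> p ` T2 = {}"
  using assms
proof
  assume "\<exists>u\<in>V. \<exists>v\<in>V. p u \<noteq> p v \<and> infinite (part_of V p u) \<and> infinite (part_of V p v)"
  then obtain u v where "p u \<noteq> p v" "infinite (part_of V p u)" "infinite (part_of V p v)"
    by blast
  then show ?thesis
    by (intro that[of "part_of V p u" "part_of V p v"]) (auto simp: part_of_def)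
next
  assume "infinite {v \<in> V. finite (part_of V p v)}"
  then obtain T1 T2 where "T1 \<subseteq> {v \<in> V. finite (part_of V p v)}" "T2 \<subseteq> {v \<in> V. finite (part_of V p v)}"
      "infinite T1" "infinite T2" "p ` T1 \<inter> p ` T2 = {}"
    by (rule infinite_image_split[OF infinite_labels_of_finite_parts])
  then show ?thesis
    by (intro that[of T1 T2]) auto
qed

section \<open>Dense monochromatic fans\<close>

definition mono_fan :: "coloring \<Rightarrow> bool \<Rightarrow> nat set \<Rightarrow> nat set \<Rightarrow> bool" where
  "mono_fan \<phi> c F Y \<longleftrightarrow> F \<inter> Y = {} \<and> (\<forall>x\<in>F. \<forall>y\<in>F \<union> Y. x \<noteq> y \<longrightarrow> \<phi> {x, y} = c)"

lemma mono_fan_insert: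
  assumes "mono_fan \<phi> c F Y" "v \<notin> F \<union> Y" "\<forall>y\<in>F \<union> Y. \<phi> {v, y} = c"
  shows "mono_fan \<phi> c (insert v F) Y"
  using assms unfolding mono_fan_def by (simp add: insert_commute)

lemma upper_density_le_split:
  "upper_density X \<le> upper_density {y \<in> X - {v}. P y} + upper_density {y \<in> X - {v}. \<not> P y}"
proof -
  have "X \<subseteq> ({y \<in> X - {v}. P y} \<union> {y \<in> X - {v}. \<not> P y}) \<union> {v}"
    by blast
  then have "upper_density X \<le> upper_density (({y \<in> X - {v}. P y} \<union> {y \<in> X - {v}. \<not> P y}) \<union> {v})"
    by (rule upper_density_mono)
  also have "\<dots> = upper_density ({y \<in> X - {v}. P y} \<union> {y \<in> X - {v}. \<not> P y})"
    by (rule upper_density_Un_finite) simp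
  also have "\<dots> \<le> upper_density {y \<in> X - {v}. P y} + upper_density {y \<in> X - {v}. \<not> P y}"
    by (rule upper_density_Un_le)
  finally show ?thesis .
qed

lemma ereal_half_le_summand:
  assumes "ereal \<delta> \<le> a + b" "0 \<le> a" "0 \<le> b"
  shows "ereal (\<delta> / 2) \<le> a \<or> ereal (\<delta> / 2) \<le> b"
  using assms by (cases a; cases b) auto

lemma dense_mono_fan:
  assumes "0 < \<delta>" "ereal \<delta> \<le> upper_density X"
  shows "\<exists>c F Y. F \<subseteq> X \<and> Y \<subseteq> X \<and> finite F \<and> card F = (if c then a else b) \<and>
           mono_fan \<phi> c F Y \<and> ereal (\<delta> / 2 ^ (a + b - 1)) \<le> upper_density Y"
  using assms
proof (induction "a + b" arbitrary: a b X \<delta> rule: less_induct)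
  case less
  have shrink: "ereal (\<delta> / 2 ^ k) \<le> upper_density X" for k
  proof -
    have "\<delta> / 2 ^ k \<le> \<delta>"
      using divide_left_mono[of 1 "2 ^ k" \<delta>] less.prems(1) by simp
    then show ?thesis
      using less.prems(2) by (metis ereal_less_eq(3) order_trans)
  qed
  consider "a = 0" | "b = 0" | "a > 0" "b > 0" by blast
  then show ?case
  proof cases
    case 1
    then show ?thesis
      using shrink by (intro exI[of _ True] exI[of _ "{}"] exI[of _ X]) (simp add: mono_fan_def)
  next
    case 2
    then show ?thesis
      using shrink by (intro exI[of _ False] exI[of _ "{}"] exI[of _ X]) (simp add: mono_fan_def)
  next
    case 3
    have "upper_density X > 0"
      using less.prems by (metis ereal_less(2) order_less_le_trans)
    then obtain v where v: "v \<in> X"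
      using infinite_if_upper_density_pos by (metis ex_in_conv finite.emptyI)
    define N where "N d = {y \<in> X - {v}. \<phi> {v, y} = d}" for d
    have "ereal \<delta> \<le> upper_density (N True) + upper_density (N False)"
      using less.prems(2) upper_density_le_split[of X v "\<lambda>y. \<phi> {v, y}"] by (simp add: N_def)
    then obtain d where d: "ereal (\<delta> / 2) \<le> upper_density (N d)"
      using ereal_half_le_summand upper_density_nonneg by blast
    \<comment> \<open>\<open>v\<close> can only extend a clique of colour \<open>d\<close>, so only the size demanded for \<open>d\<close> drops.\<close>
    define a' where "a' = (if d then a - 1 else a)"
    define b' where "b' = (if d then b else b - 1)"
    have "a' + b' < a + b" "\<delta> / 2 / 2 ^ (a' + b' - 1) = \<delta> / 2 ^ (a + b - 1)"
      using 3 by (auto simp: a'_def b'_def power_Suc[symmetric] Suc_diff_Suc simp del: power_Suc)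
    then obtain c F Y where F: "F \<subseteq> N d" "Y \<subseteq> N d" "finite F" "card F = (if c then a' else b')"
        "mono_fan \<phi> c F Y" "ereal (\<delta> / 2 ^ (a + b - 1)) \<le> upper_density Y"
      using less.hyps[where a=a' and b=b' and X="N d" and \<delta>="\<delta> / 2"] less.prems(1) d by auto
    have FY: "F \<subseteq> X" "Y \<subseteq> X"
      and v_fresh: "v \<notin> F \<union> Y" and v_joined: "\<forall>y\<in>F \<union> Y. \<phi> {v, y} = d"
      using F(1,2) by (auto simp: N_def)
    show ?thesis
    proof (cases "c = d")
      case True
      then have "card (insert v F) = (if c then a else b)"
        using F(3,4) 3 v_fresh by (auto simp: a'_def b'_def)
      moreover have "mono_fan \<phi> c (insert v F) Y"
        using mono_fan_insert[OF F(5) v_fresh] v_joined True by blast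
      ultimately show ?thesis
        using F(3,6) FY v by (intro exI[of _ c] exI[of _ "insert v F"] exI[of _ Y]) auto
    next
      case False
      then have "card F = (if c then a else b)"
        using F(4) by (auto simp: a'_def b'_def)
      then show ?thesis
        using F(3,5,6) FY by blast
    qed
  qed
qed

section \<open>The bounds on the Ramsey upper density\<close>

lemma mono_copy_onto_mono_fan:
  assumes P: "countable P" "infinite P" "P \<subseteq> V" "\<forall>x\<in>P. \<forall>y\<in>P. p x = p y"
    and rest: "finite (V - P)" "card (V - P) = card F"
    and fan: "finite F" "mono_fan \<phi> c F Y" "infinite Y" "F \<union> Y \<subseteq> {1..}"
  obtains f where "mono_copy \<phi> V p f" "f ` V = F \<union> Y"
proof -
  obtain g where g: "bij_betw g (V - P) F"
    using finite_same_card_bij[OF rest(1) fan(1) rest(2)] by blast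
  have h: "bij_betw (from_nat_into Y \<circ> to_nat_on P) P Y"
    using to_nat_on_infinite[OF P(1,2)] bij_betw_from_nat_into[OF countableI_type fan(3)]
    by (rule bij_betw_trans)
  define f where "f x = (if x \<in> P then from_nat_into Y (to_nat_on P x) else g x)" for x
  have "bij_betw f ((V - P) \<union> P) (F \<union> Y)"
  proof (rule bij_betw_combine)
    show "bij_betw f (V - P) F" using g by (rule bij_betw_cong[THEN iffD1, rotated]) (simp add: f_def)
    show "bij_betw f P Y" using h by (rule bij_betw_cong[THEN iffD1, rotated]) (simp add: f_def)
    show "F \<inter> Y = {}" using fan(2) by (simp add: mono_fan_def)
  qed
  moreover have "(V - P) \<union> P = V" using P(3) by blast
  ultimately have f: "bij_betw f V (F \<union> Y)" by simp
  have fF: "f x \<in> F" if "x \<in> V - P" for x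
    using that g by (auto simp: f_def bij_betw_def)
  have "\<phi> {f x, f y} = c" if xy: "x \<in> V" "y \<in> V" "p x \<noteq> p y" for x y
  proof -
    have "f x \<noteq> f y" using f xy by (metis bij_betw_imp_inj_on inj_on_contraD)
    moreover have "x \<in> V - P \<or> y \<in> V - P" using xy P(4) by blast
    moreover have "f x \<in> F \<union> Y" "f y \<in> F \<union> Y" using f xy(1,2) by (auto simp: bij_betw_def)
    ultimately show ?thesis
      using fF fan(2) unfolding mono_fan_def by (metis insert_commute)
  qed
  then have "mono_copy \<phi> V p f"
    using f fan(4) by (auto simp: mono_copy_def bij_betw_def)
  then show ?thesis using that f by (simp add: bij_betw_def)
qed

lemma Rd_col_lower_bound_one_infinite_part:
  assumes "countable V" "u \<in> V" "infinite (part_of V p u)"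
    and unique: "\<forall>v\<in>V. infinite (part_of V p v) \<longrightarrow> p v = p u"
    and fin: "finite {v \<in> V. finite (part_of V p v)}"
  shows "ereal (1 / 2 ^ (2 * card {v \<in> V. finite (part_of V p v)} - 1)) \<le> Rd_col \<phi> V p"
proof -
  define n where "n = card {v \<in> V. finite (part_of V p v)}"
  define P where "P = part_of V p u"
  have "V - P = {v \<in> V. finite (part_of V p v)}"
  proof -
    have "part_of V p v = P" if "v \<in> V" "p v = p u" for v
      using that by (simp add: P_def part_of_def)
    then show ?thesis
      using unique assms(3) by (auto simp: P_def part_of_def[of V p u])
  qed
  then have rest: "finite (V - P)" "card (V - P) = n"
    using fin by (simp_all add: n_def)
  have P: "countable P" "infinite P" "P \<subseteq> V" "\<forall>x\<in>P. \<forall>y\<in>P. p x = p y"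
    using assms(1,3) countable_subset[of P V] by (auto simp: P_def part_of_def)
  obtain c F Y where F: "F \<subseteq> {1..}" "Y \<subseteq> {1..}" "finite F" "card F = n" "mono_fan \<phi> c F Y"
      and Y: "ereal (1 / 2 ^ (n + n - 1)) \<le> upper_density Y"
    using dense_mono_fan[of 1 "{1..}" n n \<phi>] upper_density_atLeast_1 by (auto simp: one_ereal_def)
  have "infinite Y"
    by (intro infinite_if_upper_density_pos less_le_trans[OF _ Y]) simp
  then obtain f where f: "mono_copy \<phi> V p f" "f ` V = F \<union> Y"
    using mono_copy_onto_mono_fan[OF P rest(1)] rest(2) F by (metis Un_least)
  have "ereal (1 / 2 ^ (2 * n - 1)) \<le> upper_density Y"
    using Y by (simp add: mult_2)
  also have "\<dots> \<le> upper_density (f ` V)"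
    using f(2) by (intro upper_density_mono) blast
  also have "\<dots> \<le> Rd_col \<phi> V p"
    unfolding Rd_col_def using f(1) by (intro Sup_upper) blast
  finally show ?thesis by (simp add: n_def)
qed

lemma upper_density_binary_mono_copy_le:
  assumes copy: "mono_copy binary_coloring V p f"
    and S: "S \<subseteq> V" "finite S" "\<forall>x\<in>V - S. p x \<notin> p ` S"
  shows "upper_density (f ` V) \<le> ereal (1 / 2 ^ card S)"
proof -
  obtain c where c: "\<forall>u\<in>V. \<forall>v\<in>V. p u \<noteq> p v \<longrightarrow> binary_coloring {f u, f v} = c"
    and inj: "inj_on f V"
    using copy by (auto simp: mono_copy_def)
  have "f ` V \<subseteq> mono_nbhd binary_coloring c (f ` S) \<union> f ` S"
  proof
    fix w assume "w \<in> f ` V"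
    then obtain x where x: "x \<in> V" "w = f x" by blast
    show "w \<in> mono_nbhd binary_coloring c (f ` S) \<union> f ` S"
    proof (cases "x \<in> S")
      case False
      then show ?thesis
        using mono_copy_image_in_mono_nbhd[OF c x(1) S(1)] S(3) x by blast
    qed (use x in blast)
  qed
  then have "upper_density (f ` V) \<le> upper_density (mono_nbhd binary_coloring c (f ` S) \<union> f ` S)"
    by (rule upper_density_mono)
  also have "\<dots> = upper_density (mono_nbhd binary_coloring c (f ` S))"
    using S(2) by (simp add: upper_density_Un_finite)
  also have "\<dots> \<le> ereal (1 / 2 ^ card (f ` S))"
    using S(2) by (intro upper_density_mono_nbhd_binary_le) simp
  also have "card (f ` S) = card S"
    using inj S(1) by (simp add: card_image inj_on_subset)
  finally show ?thesis .
qed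

lemma Rd2_upper_bound_finite_parts:
  assumes "finite {v \<in> V. finite (part_of V p v)}"
  shows "Rd2 V p \<le> ereal (1 / 2 ^ card {v \<in> V. finite (part_of V p v)})"
proof -
  let ?S = "{v \<in> V. finite (part_of V p v)}"
  have "p x \<notin> p ` ?S" if "x \<in> V - ?S" for x
    using that by (auto simp: part_of_def)
  then have "upper_density (f ` V) \<le> ereal (1 / 2 ^ card ?S)"
    if "mono_copy binary_coloring V p f" for f
    using upper_density_binary_mono_copy_le[OF that _ assms] by blast
  then have "Rd_col binary_coloring V p \<le> ereal (1 / 2 ^ card ?S)"
    unfolding Rd_col_def by (intro Sup_least) blast
  moreover have "Rd2 V p \<le> Rd_col binary_coloring V p"
    unfolding Rd2_def by (intro Inf_lower) blast
  ultimately show ?thesis by simp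
qed

theorem mainTheorem8:
  fixes V :: "'a set" and p :: "'a \<Rightarrow> 'b"
  assumes "countable V" and "infinite V"
  shows "(((\<exists>u\<in>V. \<exists>v\<in>V. p u \<noteq> p v \<and> infinite (part_of V p u) \<and> infinite (part_of V p v))
            \<or> infinite {v\<in>V. finite (part_of V p v)})
          \<longrightarrow> (\<not> ramsey_dense V p \<and>
               (\<exists>\<phi>::coloring. \<forall>f. mono_copy \<phi> V p f \<longrightarrow> upper_density (f ` V) = 0)))
       \<and> (\<forall>n::nat. n \<ge> 1 \<longrightarrow>
          (\<exists>u\<in>V. infinite (part_of V p u) \<and>
             (\<forall>v\<in>V. infinite (part_of V p v) \<longrightarrow> p v = p u)) \<longrightarrow>
          finite {v\<in>V. finite (part_of V p v)} \<longrightarrow>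
          card {v\<in>V. finite (part_of V p v)} = n \<longrightarrow>
          ereal (1 / 2 ^ (2 * n - 1)) \<le> Rd2 V p \<and> Rd2 V p \<le> ereal (1 / 2 ^ n))"
proof (intro conjI impI allI)
  assume "(\<exists>u\<in>V. \<exists>v\<in>V. p u \<noteq> p v \<and> infinite (part_of V p u) \<and> infinite (part_of V p v))
            \<or> infinite {v\<in>V. finite (part_of V p v)}"
  then obtain T1 T2 where "T1 \<subseteq> V" "T2 \<subseteq> V" "infinite T1" "infinite T2" "p ` T1 \<inter> p ` T2 = {}"
    by (rule separated_infinite_subsets)
  then have null: "\<forall>f. mono_copy binary_coloring V p f \<longrightarrow> upper_density (f ` V) = 0"
    using upper_density_binary_mono_copy_eq_0 by blast
  then show "\<exists>\<phi>::coloring. \<forall>f. mono_copy \<phi> V p f \<longrightarrow> upper_density (f ` V) = 0"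
    by blast
  show "\<not> ramsey_dense V p"
    unfolding ramsey_dense_def using null by force
next
  fix n :: nat
  assume "\<exists>u\<in>V. infinite (part_of V p u) \<and> (\<forall>v\<in>V. infinite (part_of V p v) \<longrightarrow> p v = p u)"
    and fin: "finite {v\<in>V. finite (part_of V p v)}" and n: "card {v\<in>V. finite (part_of V p v)} = n"
  then obtain u where u: "u \<in> V" "infinite (part_of V p u)"
      "\<forall>v\<in>V. infinite (part_of V p v) \<longrightarrow> p v = p u"
    by blast
  show "ereal (1 / 2 ^ (2 * n - 1)) \<le> Rd2 V p"
    unfolding Rd2_def
    using Rd_col_lower_bound_one_infinite_part[OF assms(1) u fin] n by (auto intro: Inf_greatest)
  show "Rd2 V p \<le> ereal (1 / 2 ^ n)"
    using Rd2_upper_bound_finite_parts[OF fin] n by simp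
qed

end
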